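(* Let $L\in\{0,1\}$, $X$ and $A$ be jointly distributed discrete random variables with finite supports, such that conditioned on $L=0$ the message $A$ is independent of $X$, i.e. $\Pr(A=a\mid X=x,L=0)=\Pr(A=a\mid L=0)$ for all $a$ and all $x$ with $\Pr(X=x,L=0)>0$. Assume $\Pr(L=0\mid X=x)>0$ for all $x$ in the support of $X$. Then \[ I(X;A)\le \mathrm{susp}(X,A)-\mathrm{susp}(X) \] (where the right-hand side may be $+\infty$). If moreover $\Pr(L=0\mid X=x,A=a)>0$ whenever $\Pr(X=x,A=a)>0$, then equality holds if and only if $A$ has the same distribution as $A$ conditioned on $L=0$, i.e. $\Pr(A=a)=\Pr(A=a\mid L=0)$ for all $a$.
   Context: All logarithms are base $2$. For a random variable $Y$ (possibly a tuple of random variables) jointly distributed with $L\in\{0,1\}$ and a value $y$ with $\Pr(Y=y)>0$, the suspicion given $Y=y$ is $\mathrm{susp}(Y=y)=-\log\Pr(L=0\mid Y=y)\in[0,\infty]$, and the suspicion given $Y$ is $\mathrm{susp}(Y)=\sum_{y}\Pr(Y=y)\,\mathrm{susp}(Y=y)$. Thus $\mathrm{susp}(X,A)$ is the suspicion given the pair $(X,A)$. $I(\cdot;\cdot)$ is Shannon mutual information. (Interpretation: $L=1$ means "Alice knows the secret $X$"; when $L=0$ she picks her message $A$ without regard to $X$.) *)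

theory Defs
  imports "HOL-Probability.Probability"
begin

text \<open>A joint distribution of (L, X, A) is a pmf on outcomes (l, x, a) :: bool \<times> 'x \<times> 'a,
  with l = True meaning L = 1 and l = False meaning L = 0.\<close>

definition Lv :: "bool \<times> 'x \<times> 'a \<Rightarrow> bool" where "Lv \<omega> = fst \<omega>"
definition Xv :: "bool \<times> 'x \<times> 'a \<Rightarrow> 'x" where "Xv \<omega> = fst (snd \<omega>)"
definition Av :: "bool \<times> 'x \<times> 'a \<Rightarrow> 'a" where "Av \<omega> = snd (snd \<omega>)"

definition Pr :: "'w pmf \<Rightarrow> ('w \<Rightarrow> bool) \<Rightarrow> real" where
  "Pr P E = measure_pmf.prob P {\<omega>. E \<omega>}"

definition cPr :: "'w pmf \<Rightarrow> ('w \<Rightarrow> bool) \<Rightarrow> ('w \<Rightarrow> bool) \<Rightarrow> real" where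
  "cPr P E F = Pr P (\<lambda>\<omega>. E \<omega> \<and> F \<omega>) / Pr P F"

definition susp_at :: "(bool \<times> 'x \<times> 'a) pmf \<Rightarrow> (bool \<times> 'x \<times> 'a \<Rightarrow> 'y) \<Rightarrow> 'y \<Rightarrow> ereal" where
  "susp_at P Y y =
     (let q = cPr P (\<lambda>\<omega>. \<not> Lv \<omega>) (\<lambda>\<omega>. Y \<omega> = y)
      in if q = 0 then \<infinity> else ereal (- log 2 q))"

definition susp :: "(bool \<times> 'x \<times> 'a) pmf \<Rightarrow> (bool \<times> 'x \<times> 'a \<Rightarrow> 'y) \<Rightarrow> ereal" where
  "susp P Y = (\<Sum>y \<in> Y ` set_pmf P. ereal (Pr P (\<lambda>\<omega>. Y \<omega> = y)) * susp_at P Y y)"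

definition mutual_info :: "'w pmf \<Rightarrow> ('w \<Rightarrow> 'u) \<Rightarrow> ('w \<Rightarrow> 'v) \<Rightarrow> real" where
  "mutual_info P U V =
     (\<Sum>(u, v) \<in> (\<lambda>\<omega>. (U \<omega>, V \<omega>)) ` set_pmf P.
        Pr P (\<lambda>\<omega>. U \<omega> = u \<and> V \<omega> = v) *
        log 2 (Pr P (\<lambda>\<omega>. U \<omega> = u \<and> V \<omega> = v) /
               (Pr P (\<lambda>\<omega>. U \<omega> = u) * Pr P (\<lambda>\<omega>. V \<omega> = v))))"

end

theory Submission
  imports Defs
begin

text \<open>Write \<open>q(x,a) = Pr(L=0 | X=x, A=a)\<close> and \<open>r(x) = Pr(L=0 | X=x)\<close>. Since \<open>A\<close> is independent
  of \<open>X\<close> given \<open>L = 0\<close>, Bayes' rule gives \<open>q(x,a) = Pr(A=a | L=0) Pr(X=x, L=0) / Pr(x,a)\<close>, hence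
  \<open>log r(x) - log q(x,a) = log (Pr(x,a) / (Pr(x) Pr(a))) + log (Pr(a) / Pr(A=a | L=0))\<close>.
  Averaging over \<open>(x,a)\<close> shows that \<open>susp(X,A) - susp(X)\<close> is \<open>I(X;A)\<close> plus the relative entropy
  of the law of \<open>A\<close> with respect to its law given \<open>L = 0\<close>, and Gibbs' inequality says that this
  relative entropy is nonnegative and vanishes only if the two laws agree. If \<open>q\<close> vanishes somewhere
  on the support, \<open>susp(X,A)\<close> is infinite while \<open>susp(X)\<close> is finite.\<close>

definition rel_entropy :: "'i set \<Rightarrow> ('i \<Rightarrow> real) \<Rightarrow> ('i \<Rightarrow> real) \<Rightarrow> real" where
  "rel_entropy I p q = (\<Sum>i\<in>I. p i * log 2 (p i / q i))"

lemma log_ratio_lower_bound: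
  fixes p q :: real
  assumes "0 < p" "0 < q"
  shows "(p - q) / ln 2 \<le> p * log 2 (p / q)"
    and "p * log 2 (p / q) = (p - q) / ln 2 \<longleftrightarrow> p = q"
proof -
  define t where "t = q / p"
  have t: "0 < t" using assms by (simp add: t_def)
  have lhs: "(p - q) / ln 2 = p * (1 - t) / ln 2" and rhs: "p * log 2 (p / q) = p * (- ln t) / ln 2"
    using assms by (simp_all add: t_def field_simps log_def ln_div)
  have "1 - t \<le> - ln t" using ln_le_minus_one[OF t] by simp
  then have "p * (1 - t) / ln 2 \<le> p * (- ln t) / ln 2"
    using assms by (intro divide_right_mono mult_left_mono) auto
  then show "(p - q) / ln 2 \<le> p * log 2 (p / q)"
    unfolding lhs rhs .
  have "p * log 2 (p / q) = (p - q) / ln 2 \<longleftrightarrow> ln t = t - 1"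
    unfolding lhs rhs using assms by (simp only: divide_cancel_right mult_cancel_left) auto
  also have "\<dots> \<longleftrightarrow> t = 1" using ln_eq_minus_one[OF t] by auto
  also have "\<dots> \<longleftrightarrow> p = q" using assms by (auto simp: t_def)
  finally show "p * log 2 (p / q) = (p - q) / ln 2 \<longleftrightarrow> p = q" .
qed

lemma rel_entropy_eq_sum_excess:
  assumes "sum p I = sum q I"
  shows "rel_entropy I p q = (\<Sum>i\<in>I. p i * log 2 (p i / q i) - (p i - q i) / ln 2)"
proof -
  have "(\<Sum>i\<in>I. (p i - q i) / ln 2) = 0"
    using assms by (simp add: sum_divide_distrib[symmetric] sum_subtractf)
  then show ?thesis by (simp add: rel_entropy_def sum_subtractf)
qed

lemma rel_entropy_nonneg:
  assumes "sum p I = sum q I" "\<And>i. i \<in> I \<Longrightarrow> 0 < p i" "\<And>i. i \<in> I \<Longrightarrow> 0 < q i"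
  shows "0 \<le> rel_entropy I p q"
  unfolding rel_entropy_eq_sum_excess[OF assms(1)]
  by (intro sum_nonneg) (simp add: log_ratio_lower_bound(1) assms)

lemma rel_entropy_eq_0_iff:
  assumes "finite I" "sum p I = sum q I" "\<And>i. i \<in> I \<Longrightarrow> 0 < p i" "\<And>i. i \<in> I \<Longrightarrow> 0 < q i"
  shows "rel_entropy I p q = 0 \<longleftrightarrow> (\<forall>i\<in>I. p i = q i)"
  unfolding rel_entropy_eq_sum_excess[OF assms(2)]
  by (subst sum_nonneg_eq_0_iff)
    (simp_all add: assms log_ratio_lower_bound)

lemma Pr_pos: "\<omega> \<in> set_pmf P \<Longrightarrow> E \<omega> \<Longrightarrow> 0 < Pr P E"
  unfolding Pr_def by (rule measure_pmf_posI) auto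

lemma Pr_eq_0: "(\<And>\<omega>. \<omega> \<in> set_pmf P \<Longrightarrow> \<not> E \<omega>) \<Longrightarrow> Pr P E = 0"
  unfolding Pr_def measure_pmf_zero_iff by auto

lemma Pr_mono: "(\<And>\<omega>. E \<omega> \<Longrightarrow> F \<omega>) \<Longrightarrow> Pr P E \<le> Pr P F"
  unfolding Pr_def by (rule measure_pmf.finite_measure_mono) auto

lemma Pr_eq_0_notin_image: "y \<notin> Y ` set_pmf P \<Longrightarrow> Pr P (\<lambda>\<omega>. Y \<omega> = y \<and> F \<omega>) = 0"
  by (rule Pr_eq_0) auto

lemma cPr_nonneg: "0 \<le> cPr P E F"
  unfolding cPr_def Pr_def by simp

lemma Pr_pos_if_cPr_pos:
  assumes "0 < cPr P E F" "\<And>\<omega>. E \<omega> \<Longrightarrow> F \<omega> \<Longrightarrow> G \<omega>"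
  shows "0 < Pr P G"
proof -
  have "0 < Pr P (\<lambda>\<omega>. E \<omega> \<and> F \<omega>)"
    using assms(1) unfolding cPr_def by (simp add: zero_less_divide_iff Pr_def)
  also have "\<dots> \<le> Pr P G"
    using assms(2) by (intro Pr_mono) auto
  finally show ?thesis .
qed

lemma sum_Pr_image_eq_sum_pmf:
  assumes "finite (set_pmf P)"
  shows "(\<Sum>y\<in>Y ` set_pmf P. Pr P (\<lambda>\<omega>. Y \<omega> = y) * f y) = (\<Sum>\<omega>\<in>set_pmf P. pmf P \<omega> * f (Y \<omega>))"
proof -
  have "(\<Sum>y\<in>Y ` set_pmf P. Pr P (\<lambda>\<omega>. Y \<omega> = y) * f y) = measure_pmf.expectation (map_pmf Y P) f"
    by (subst integral_measure_pmf_real[of "Y ` set_pmf P"])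
      (auto simp: assms Pr_def pmf_map vimage_def mult.commute)
  also have "\<dots> = measure_pmf.expectation P (\<lambda>\<omega>. f (Y \<omega>))"
    by simp
  also have "\<dots> = (\<Sum>\<omega>\<in>set_pmf P. pmf P \<omega> * f (Y \<omega>))"
    by (subst integral_measure_pmf_real[of "set_pmf P"]) (auto simp: assms mult.commute)
  finally show ?thesis .
qed

lemma sum_Pr_image_conj_eq:
  assumes "finite (set_pmf P)"
  shows "(\<Sum>y\<in>Y ` set_pmf P. Pr P (\<lambda>\<omega>. Y \<omega> = y \<and> F \<omega>)) = Pr P F"
proof -
  let ?B = "\<lambda>y. {\<omega>. Y \<omega> = y \<and> F \<omega>}"
  have "(\<Sum>y\<in>Y ` set_pmf P. Pr P (\<lambda>\<omega>. Y \<omega> = y \<and> F \<omega>)) = measure_pmf.prob P (\<Union>y\<in>Y ` set_pmf P. ?B y)"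
    unfolding Pr_def
    by (rule measure_pmf.finite_measure_finite_Union[symmetric]) (auto simp: assms disjoint_family_on_def)
  also have "\<dots> = measure_pmf.prob P ((\<Union>y\<in>Y ` set_pmf P. ?B y) \<inter> set_pmf P)"
    by (rule measure_Int_set_pmf[symmetric])
  also have "(\<Union>y\<in>Y ` set_pmf P. ?B y) \<inter> set_pmf P = {\<omega>. F \<omega>} \<inter> set_pmf P"
    by blast
  also have "measure_pmf.prob P \<dots> = Pr P F"
    unfolding Pr_def by (rule measure_Int_set_pmf)
  finally show ?thesis .
qed

lemma sum_cPr_image_eq_1:
  assumes "finite (set_pmf P)" "0 < Pr P F"
  shows "(\<Sum>y\<in>Y ` set_pmf P. cPr P (\<lambda>\<omega>. Y \<omega> = y) F) = 1"
  using assms unfolding cPr_def sum_divide_distrib[symmetric] by (simp add: sum_Pr_image_conj_eq)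

lemma sum_Pr_image_eq_1:
  assumes "finite (set_pmf P)"
  shows "(\<Sum>y\<in>Y ` set_pmf P. Pr P (\<lambda>\<omega>. Y \<omega> = y)) = 1"
  using sum_Pr_image_conj_eq[OF assms, of Y "\<lambda>_. True"] by (simp add: Pr_def)

lemma susp_eq_sum_pmf:
  assumes "finite (set_pmf P)"
    and "\<And>\<omega>. \<omega> \<in> set_pmf P \<Longrightarrow> 0 < cPr P (\<lambda>\<omega>'. \<not> Lv \<omega>') (\<lambda>\<omega>'. Y \<omega>' = Y \<omega>)"
  shows "susp P Y =
    ereal (\<Sum>\<omega>\<in>set_pmf P. pmf P \<omega> * - log 2 (cPr P (\<lambda>\<omega>'. \<not> Lv \<omega>') (\<lambda>\<omega>'. Y \<omega>' = Y \<omega>)))"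
proof -
  let ?s = "\<lambda>y. - log 2 (cPr P (\<lambda>\<omega>. \<not> Lv \<omega>) (\<lambda>\<omega>. Y \<omega> = y))"
  have "susp P Y = (\<Sum>y\<in>Y ` set_pmf P. ereal (Pr P (\<lambda>\<omega>. Y \<omega> = y) * ?s y))"
    unfolding susp_def
    by (intro sum.cong) (auto simp: susp_at_def dest!: assms(2) intro: less_imp_neq[symmetric])
  also have "\<dots> = ereal (\<Sum>\<omega>\<in>set_pmf P. pmf P \<omega> * ?s (Y \<omega>))"
    unfolding sum_ereal sum_Pr_image_eq_sum_pmf[OF assms(1)] ..
  finally show ?thesis .
qed

lemma susp_eq_infinity:
  assumes "finite (set_pmf P)" "\<omega> \<in> set_pmf P"
    and "cPr P (\<lambda>\<omega>'. \<not> Lv \<omega>') (\<lambda>\<omega>'. Y \<omega>' = Y \<omega>) = 0"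
  shows "susp P Y = \<infinity>"
proof -
  have "ereal (Pr P (\<lambda>\<omega>'. Y \<omega>' = Y \<omega>)) * susp_at P Y (Y \<omega>) = \<infinity>"
    using assms(3) Pr_pos[OF assms(2), of "\<lambda>\<omega>'. Y \<omega>' = Y \<omega>"] by (simp add: susp_at_def)
  then show ?thesis
    unfolding susp_def sum_Pinfty using assms(1,2) by blast
qed

lemma susp_pair_minus_susp_eq_infinity:
  assumes "finite (set_pmf P)"
    and "\<And>\<omega>. \<omega> \<in> set_pmf P \<Longrightarrow> 0 < cPr P (\<lambda>\<omega>'. \<not> Lv \<omega>') (\<lambda>\<omega>'. Y \<omega>' = Y \<omega>)"
    and "\<omega> \<in> set_pmf P" "cPr P (\<lambda>\<omega>'. \<not> Lv \<omega>') (\<lambda>\<omega>'. Y \<omega>' = Y \<omega> \<and> Z \<omega>' = Z \<omega>) = 0"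
  shows "susp P (\<lambda>\<omega>. (Y \<omega>, Z \<omega>)) - susp P Y = \<infinity>"
proof -
  have "susp P (\<lambda>\<omega>. (Y \<omega>, Z \<omega>)) = \<infinity>"
    using susp_eq_infinity[OF assms(1,3), of "\<lambda>\<omega>. (Y \<omega>, Z \<omega>)"] assms(4) by simp
  moreover have "susp P Y \<noteq> \<infinity>"
    using susp_eq_sum_pmf[OF assms(1,2)] by simp
  ultimately show ?thesis
    by simp
qed

lemma mutual_info_eq_sum_pmf:
  assumes "finite (set_pmf P)"
  shows "mutual_info P U V = (\<Sum>\<omega>\<in>set_pmf P. pmf P \<omega> *
    log 2 (Pr P (\<lambda>\<omega>'. U \<omega>' = U \<omega> \<and> V \<omega>' = V \<omega>) /
           (Pr P (\<lambda>\<omega>'. U \<omega>' = U \<omega>) * Pr P (\<lambda>\<omega>'. V \<omega>' = V \<omega>))))"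
proof -
  let ?f = "\<lambda>(u, v). log 2 (Pr P (\<lambda>\<omega>. U \<omega> = u \<and> V \<omega> = v) /
                               (Pr P (\<lambda>\<omega>. U \<omega> = u) * Pr P (\<lambda>\<omega>. V \<omega> = v)))"
  have "mutual_info P U V =
      (\<Sum>y\<in>(\<lambda>\<omega>. (U \<omega>, V \<omega>)) ` set_pmf P. Pr P (\<lambda>\<omega>. (U \<omega>, V \<omega>) = y) * ?f y)"
    unfolding mutual_info_def by (intro sum.cong) auto
  also have "\<dots> = (\<Sum>\<omega>\<in>set_pmf P. pmf P \<omega> * ?f (U \<omega>, V \<omega>))"
    by (rule sum_Pr_image_eq_sum_pmf[OF assms])
  finally show ?thesis by simp
qed

lemma
  assumes "finite (set_pmf P)" and pos: "\<And>\<omega>. \<omega> \<in> set_pmf P \<Longrightarrow> 0 < Pr P (\<lambda>\<omega>'. Y \<omega>' = Y \<omega> \<and> F \<omega>')"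
  shows rel_entropy_marginal_cond_nonneg:
      "0 \<le> rel_entropy (Y ` set_pmf P) (\<lambda>y. Pr P (\<lambda>\<omega>. Y \<omega> = y)) (\<lambda>y. cPr P (\<lambda>\<omega>. Y \<omega> = y) F)"
    and rel_entropy_marginal_cond_eq_0_iff:
      "rel_entropy (Y ` set_pmf P) (\<lambda>y. Pr P (\<lambda>\<omega>. Y \<omega> = y)) (\<lambda>y. cPr P (\<lambda>\<omega>. Y \<omega> = y) F) = 0
       \<longleftrightarrow> (\<forall>y. Pr P (\<lambda>\<omega>. Y \<omega> = y) = cPr P (\<lambda>\<omega>. Y \<omega> = y) F)"
proof -
  obtain \<omega>\<^sub>0 where "\<omega>\<^sub>0 \<in> set_pmf P" using set_pmf_not_empty[of P] by blast
  then have "0 < Pr P (\<lambda>\<omega>. Y \<omega> = Y \<omega>\<^sub>0 \<and> F \<omega>)" by (rule pos)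
  also have "\<dots> \<le> Pr P F" by (rule Pr_mono) auto
  finally have "0 < Pr P F" .
  then have sums: "(\<Sum>y\<in>Y ` set_pmf P. Pr P (\<lambda>\<omega>. Y \<omega> = y)) = (\<Sum>y\<in>Y ` set_pmf P. cPr P (\<lambda>\<omega>. Y \<omega> = y) F)"
    using assms(1) by (simp add: sum_Pr_image_eq_1 sum_cPr_image_eq_1)
  have Pr_image_pos: "0 < Pr P (\<lambda>\<omega>. Y \<omega> = y)" if "y \<in> Y ` set_pmf P" for y
    using that by (auto intro: Pr_pos)
  have cPr_image_pos: "0 < cPr P (\<lambda>\<omega>. Y \<omega> = y) F" if "y \<in> Y ` set_pmf P" for y
  proof -
    have "0 < Pr P (\<lambda>\<omega>. Y \<omega> = y \<and> F \<omega>)" using that pos by auto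
    moreover have "Pr P (\<lambda>\<omega>. Y \<omega> = y \<and> F \<omega>) \<le> Pr P F" by (rule Pr_mono) auto
    ultimately show ?thesis unfolding cPr_def by simp
  qed
  show "0 \<le> rel_entropy (Y ` set_pmf P) (\<lambda>y. Pr P (\<lambda>\<omega>. Y \<omega> = y)) (\<lambda>y. cPr P (\<lambda>\<omega>. Y \<omega> = y) F)"
    by (rule rel_entropy_nonneg[OF sums Pr_image_pos cPr_image_pos])
  have "rel_entropy (Y ` set_pmf P) (\<lambda>y. Pr P (\<lambda>\<omega>. Y \<omega> = y)) (\<lambda>y. cPr P (\<lambda>\<omega>. Y \<omega> = y) F) = 0
       \<longleftrightarrow> (\<forall>y\<in>Y ` set_pmf P. Pr P (\<lambda>\<omega>. Y \<omega> = y) = cPr P (\<lambda>\<omega>. Y \<omega> = y) F)"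
    by (rule rel_entropy_eq_0_iff[OF finite_imageI[OF assms(1)] sums Pr_image_pos cPr_image_pos])
  also have "\<dots> \<longleftrightarrow> (\<forall>y. Pr P (\<lambda>\<omega>. Y \<omega> = y) = cPr P (\<lambda>\<omega>. Y \<omega> = y) F)"
  proof (intro iffI allI)
    fix y
    assume eq: "\<forall>y\<in>Y ` set_pmf P. Pr P (\<lambda>\<omega>. Y \<omega> = y) = cPr P (\<lambda>\<omega>. Y \<omega> = y) F"
    show "Pr P (\<lambda>\<omega>. Y \<omega> = y) = cPr P (\<lambda>\<omega>. Y \<omega> = y) F"
    proof (cases "y \<in> Y ` set_pmf P")
      case False
      then show ?thesis
        using Pr_eq_0_notin_image[of y Y P "\<lambda>_. True"] Pr_eq_0_notin_image[of y Y P F]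
        by (simp add: cPr_def)
    qed (use eq in blast)
  qed blast
  finally show "rel_entropy (Y ` set_pmf P) (\<lambda>y. Pr P (\<lambda>\<omega>. Y \<omega> = y)) (\<lambda>y. cPr P (\<lambda>\<omega>. Y \<omega> = y) F) = 0
       \<longleftrightarrow> (\<forall>y. Pr P (\<lambda>\<omega>. Y \<omega> = y) = cPr P (\<lambda>\<omega>. Y \<omega> = y) F)" .
qed

lemma susp_gap_eq_mutual_info_plus_rel_entropy:
  fixes P :: "(bool \<times> 'x \<times> 'a) pmf"
  assumes fin: "finite (set_pmf P)"
    and indep: "\<And>a x. Pr P (\<lambda>\<omega>. Xv \<omega> = x \<and> \<not> Lv \<omega>) > 0 \<Longrightarrow>
        cPr P (\<lambda>\<omega>. Av \<omega> = a) (\<lambda>\<omega>. Xv \<omega> = x \<and> \<not> Lv \<omega>) = cPr P (\<lambda>\<omega>. Av \<omega> = a) (\<lambda>\<omega>. \<not> Lv \<omega>)"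
    and posX: "\<And>\<omega>. \<omega> \<in> set_pmf P \<Longrightarrow> 0 < cPr P (\<lambda>\<omega>'. \<not> Lv \<omega>') (\<lambda>\<omega>'. Xv \<omega>' = Xv \<omega>)"
    and posXA: "\<And>\<omega>. \<omega> \<in> set_pmf P \<Longrightarrow>
        0 < cPr P (\<lambda>\<omega>'. \<not> Lv \<omega>') (\<lambda>\<omega>'. Xv \<omega>' = Xv \<omega> \<and> Av \<omega>' = Av \<omega>)"
  shows "susp P (\<lambda>\<omega>. (Xv \<omega>, Av \<omega>)) - susp P Xv =
    ereal (mutual_info P Xv Av + rel_entropy (Av ` set_pmf P) (\<lambda>a. Pr P (\<lambda>\<omega>. Av \<omega> = a))
                                               (\<lambda>a. cPr P (\<lambda>\<omega>. Av \<omega> = a) (\<lambda>\<omega>. \<not> Lv \<omega>)))"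
proof -
  define pX :: "bool \<times> 'x \<times> 'a \<Rightarrow> real" where "pX \<omega> = Pr P (\<lambda>\<omega>'. Xv \<omega>' = Xv \<omega>)" for \<omega>
  define pA :: "bool \<times> 'x \<times> 'a \<Rightarrow> real" where "pA \<omega> = Pr P (\<lambda>\<omega>'. Av \<omega>' = Av \<omega>)" for \<omega>
  define pXA :: "bool \<times> 'x \<times> 'a \<Rightarrow> real" where "pXA \<omega> = Pr P (\<lambda>\<omega>'. Xv \<omega>' = Xv \<omega> \<and> Av \<omega>' = Av \<omega>)" for \<omega>
  define pXL :: "bool \<times> 'x \<times> 'a \<Rightarrow> real" where "pXL \<omega> = Pr P (\<lambda>\<omega>'. Xv \<omega>' = Xv \<omega> \<and> \<not> Lv \<omega>')" for \<omega>
  define b :: "bool \<times> 'x \<times> 'a \<Rightarrow> real" where "b \<omega> = cPr P (\<lambda>\<omega>'. Av \<omega>' = Av \<omega>) (\<lambda>\<omega>'. \<not> Lv \<omega>')" for \<omega>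
  define qX :: "bool \<times> 'x \<times> 'a \<Rightarrow> real" where "qX \<omega> = cPr P (\<lambda>\<omega>'. \<not> Lv \<omega>') (\<lambda>\<omega>'. Xv \<omega>' = Xv \<omega>)" for \<omega>
  define qXA :: "bool \<times> 'x \<times> 'a \<Rightarrow> real" where "qXA \<omega> = cPr P (\<lambda>\<omega>'. \<not> Lv \<omega>') (\<lambda>\<omega>'. Xv \<omega>' = Xv \<omega> \<and> Av \<omega>' = Av \<omega>)" for \<omega>
  have pointwise: "- log 2 (qXA \<omega>) + log 2 (qX \<omega>) = log 2 (pXA \<omega> / (pX \<omega> * pA \<omega>)) + log 2 (pA \<omega> / b \<omega>)"
    if "\<omega> \<in> set_pmf P" for \<omega>
  proof -
    have pos: "0 < pX \<omega>" "0 < pA \<omega>" "0 < pXA \<omega>"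
      unfolding pX_def pA_def pXA_def using that by (auto intro: Pr_pos)
    have qX: "qX \<omega> = pXL \<omega> / pX \<omega>"
      unfolding qX_def pXL_def pX_def cPr_def by (simp add: conj_commute)
    then have "0 < pXL \<omega>"
      using posX[OF that] pos by (simp add: qX_def zero_less_divide_iff)
    have "qXA \<omega> * pXA \<omega> = Pr P (\<lambda>\<omega>'. Av \<omega>' = Av \<omega> \<and> Xv \<omega>' = Xv \<omega> \<and> \<not> Lv \<omega>')"
      using pos unfolding qXA_def pXA_def cPr_def by (simp add: conj_ac)
    also have "\<dots> = cPr P (\<lambda>\<omega>'. Av \<omega>' = Av \<omega>) (\<lambda>\<omega>'. Xv \<omega>' = Xv \<omega> \<and> \<not> Lv \<omega>') * pXL \<omega>"
      using \<open>0 < pXL \<omega>\<close> unfolding cPr_def pXL_def by simp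
    also have "\<dots> = b \<omega> * pXL \<omega>"
      using indep \<open>0 < pXL \<omega>\<close> unfolding b_def pXL_def by simp
    finally have qXA: "qXA \<omega> = b \<omega> * pXL \<omega> / pXA \<omega>"
      using pos by (simp add: field_simps)
    with posXA[OF that] pos \<open>0 < pXL \<omega>\<close> have "0 < b \<omega>"
      by (simp add: qXA_def zero_less_divide_iff zero_less_mult_iff)
    with pos \<open>0 < pXL \<omega>\<close> show ?thesis
      unfolding qX qXA by (simp add: log_divide log_mult)
  qed
  have "susp P (\<lambda>\<omega>. (Xv \<omega>, Av \<omega>)) = ereal (\<Sum>\<omega>\<in>set_pmf P. pmf P \<omega> * - log 2 (qXA \<omega>))"
    using susp_eq_sum_pmf[OF fin, of "\<lambda>\<omega>. (Xv \<omega>, Av \<omega>)"] posXA by (simp add: qXA_def)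
  moreover have "susp P Xv = ereal (\<Sum>\<omega>\<in>set_pmf P. pmf P \<omega> * - log 2 (qX \<omega>))"
    using susp_eq_sum_pmf[OF fin, of Xv] posX by (simp add: qX_def)
  moreover have "mutual_info P Xv Av = (\<Sum>\<omega>\<in>set_pmf P. pmf P \<omega> * log 2 (pXA \<omega> / (pX \<omega> * pA \<omega>)))"
    unfolding mutual_info_eq_sum_pmf[OF fin] pXA_def pX_def pA_def ..
  moreover have "rel_entropy (Av ` set_pmf P) (\<lambda>a. Pr P (\<lambda>\<omega>. Av \<omega> = a))
      (\<lambda>a. cPr P (\<lambda>\<omega>. Av \<omega> = a) (\<lambda>\<omega>. \<not> Lv \<omega>)) = (\<Sum>\<omega>\<in>set_pmf P. pmf P \<omega> * log 2 (pA \<omega> / b \<omega>))"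
    unfolding rel_entropy_def sum_Pr_image_eq_sum_pmf[OF fin] pA_def b_def ..
  moreover have "(\<Sum>\<omega>\<in>set_pmf P. pmf P \<omega> * - log 2 (qXA \<omega>)) - (\<Sum>\<omega>\<in>set_pmf P. pmf P \<omega> * - log 2 (qX \<omega>)) =
      (\<Sum>\<omega>\<in>set_pmf P. pmf P \<omega> * log 2 (pXA \<omega> / (pX \<omega> * pA \<omega>))) + (\<Sum>\<omega>\<in>set_pmf P. pmf P \<omega> * log 2 (pA \<omega> / b \<omega>))"
    using pointwise by (simp add: sum_subtractf[symmetric] sum.distrib[symmetric] distrib_left[symmetric]
        right_diff_distrib[symmetric] cong: sum.cong)
  ultimately show ?thesis by simp
qed

theorem theorem3p1:
  fixes P :: "(bool \<times> 'x \<times> 'a) pmf"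
  assumes fin: "finite (set_pmf P)"
    and indep: "\<And>a x. Pr P (\<lambda>\<omega>. Xv \<omega> = x \<and> \<not> Lv \<omega>) > 0 \<Longrightarrow>
        cPr P (\<lambda>\<omega>. Av \<omega> = a) (\<lambda>\<omega>. Xv \<omega> = x \<and> \<not> Lv \<omega>) = cPr P (\<lambda>\<omega>. Av \<omega> = a) (\<lambda>\<omega>. \<not> Lv \<omega>)"
    and posX: "\<And>x. x \<in> Xv ` set_pmf P \<Longrightarrow> cPr P (\<lambda>\<omega>. \<not> Lv \<omega>) (\<lambda>\<omega>. Xv \<omega> = x) > 0"
  shows "ereal (mutual_info P Xv Av) \<le> susp P (\<lambda>\<omega>. (Xv \<omega>, Av \<omega>)) - susp P Xv \<and>
         ((\<forall>x a. Pr P (\<lambda>\<omega>. Xv \<omega> = x \<and> Av \<omega> = a) > 0 \<longrightarrow>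
             cPr P (\<lambda>\<omega>. \<not> Lv \<omega>) (\<lambda>\<omega>. Xv \<omega> = x \<and> Av \<omega> = a) > 0) \<longrightarrow>
         (ereal (mutual_info P Xv Av) = susp P (\<lambda>\<omega>. (Xv \<omega>, Av \<omega>)) - susp P Xv
          \<longleftrightarrow> (\<forall>a. Pr P (\<lambda>\<omega>. Av \<omega> = a) = cPr P (\<lambda>\<omega>. Av \<omega> = a) (\<lambda>\<omega>. \<not> Lv \<omega>))))"
proof -
  let ?D = "rel_entropy (Av ` set_pmf P) (\<lambda>a. Pr P (\<lambda>\<omega>. Av \<omega> = a))
                                         (\<lambda>a. cPr P (\<lambda>\<omega>. Av \<omega> = a) (\<lambda>\<omega>. \<not> Lv \<omega>))"
  show ?thesis
  proof (cases "\<forall>\<omega>\<in>set_pmf P. 0 < cPr P (\<lambda>\<omega>'. \<not> Lv \<omega>') (\<lambda>\<omega>'. Xv \<omega>' = Xv \<omega> \<and> Av \<omega>' = Av \<omega>)")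
    case True
    have posAL: "0 < Pr P (\<lambda>\<omega>'. Av \<omega>' = Av \<omega> \<and> \<not> Lv \<omega>')" if "\<omega> \<in> set_pmf P" for \<omega>
      by (rule Pr_pos_if_cPr_pos[OF True[rule_format, OF that]]) auto
    have gap: "susp P (\<lambda>\<omega>. (Xv \<omega>, Av \<omega>)) - susp P Xv = ereal (mutual_info P Xv Av + ?D)"
      using susp_gap_eq_mutual_info_plus_rel_entropy[OF fin indep posX[OF imageI] True[rule_format]] .
    have "0 \<le> ?D"
      by (rule rel_entropy_marginal_cond_nonneg[OF fin posAL])
    moreover have "?D = 0 \<longleftrightarrow> (\<forall>a. Pr P (\<lambda>\<omega>. Av \<omega> = a) = cPr P (\<lambda>\<omega>. Av \<omega> = a) (\<lambda>\<omega>. \<not> Lv \<omega>))"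
      by (rule rel_entropy_marginal_cond_eq_0_iff[OF fin posAL])
    ultimately show ?thesis
      unfolding gap by simp
  next
    case False
    then obtain \<omega> where \<omega>: "\<omega> \<in> set_pmf P"
      and "\<not> 0 < cPr P (\<lambda>\<omega>'. \<not> Lv \<omega>') (\<lambda>\<omega>'. Xv \<omega>' = Xv \<omega> \<and> Av \<omega>' = Av \<omega>)"
      by blast
    then have zero: "cPr P (\<lambda>\<omega>'. \<not> Lv \<omega>') (\<lambda>\<omega>'. Xv \<omega>' = Xv \<omega> \<and> Av \<omega>' = Av \<omega>) = 0"
      using cPr_nonneg[of P "\<lambda>\<omega>'. \<not> Lv \<omega>'"] by (simp add: order.strict_iff_order)
    have "susp P (\<lambda>\<omega>. (Xv \<omega>, Av \<omega>)) - susp P Xv = \<infinity>"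
      by (rule susp_pair_minus_susp_eq_infinity[OF fin posX[OF imageI] \<omega> zero])
    moreover have "0 < Pr P (\<lambda>\<omega>'. Xv \<omega>' = Xv \<omega> \<and> Av \<omega>' = Av \<omega>)"
      using \<omega> by (rule Pr_pos) simp
    ultimately show ?thesis
      using zero by force
  qed
qed

end
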